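(* Let $R$ be a commutative semiring with identity that is additively cancellative, yoked and zerosumfree. Then for every $a\in R$, the principal ideal $\langle a\rangle = aR=\{ar\mid r\in R\}$ is a $k$-ideal of $R$.
   Context: A semiring is a set $R$ with addition and multiplication such that $(R,+)$ is a commutative monoid with identity $0$, $(R,\cdot)$ is a monoid with identity $1$, multiplication distributes over addition on both sides, $0\cdot r=0=r\cdot 0$ for all $r$, and $1\neq 0$. An ideal $I$ is a $k$-ideal if $x+y\in I$ and $x\in I$ imply $y\in I$. $R$ is additively cancellative if $a+c=b+c$ implies $a=b$; yoked if for all $a,b\in R$ there exists $r\in R$ with $a+r=b$ or $b+r=a$; zerosumfree if $a+b=0$ implies $a=b=0$. *)

theory Defs
  imports Main
begin

definition add_cancellative :: "'a::comm_semiring_1 itself \<Rightarrow> bool" where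
  "add_cancellative _ \<longleftrightarrow> (\<forall>a b c :: 'a. a + c = b + c \<longrightarrow> a = b)"

definition yoked :: "'a::comm_semiring_1 itself \<Rightarrow> bool" where
  "yoked _ \<longleftrightarrow> (\<forall>a b :: 'a. \<exists>r. a + r = b \<or> b + r = a)"

definition zerosumfree :: "'a::comm_semiring_1 itself \<Rightarrow> bool" where
  "zerosumfree _ \<longleftrightarrow> (\<forall>a b :: 'a. a + b = 0 \<longrightarrow> a = 0 \<and> b = 0)"

definition semiring_ideal :: "'a::comm_semiring_1 set \<Rightarrow> bool" where
  "semiring_ideal I \<longleftrightarrow> 0 \<in> I \<and> (\<forall>x\<in>I. \<forall>y\<in>I. x + y \<in> I) \<and> (\<forall>x\<in>I. \<forall>r. r * x \<in> I)"

definition k_ideal :: "'a::comm_semiring_1 set \<Rightarrow> bool" where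
  "k_ideal I \<longleftrightarrow> semiring_ideal I \<and> (\<forall>x y. x + y \<in> I \<longrightarrow> x \<in> I \<longrightarrow> y \<in> I)"

definition principal_ideal :: "'a::comm_semiring_1 \<Rightarrow> 'a set" where
  "principal_ideal a = {a * r | r. True}"

end

theory Submission
  imports Defs
begin

text \<open>Write \<open>x = a r\<close> and \<open>x + y = a s\<close>. Yokedness compares the multipliers: if
  \<open>s = r + t\<close>, cancelling \<open>x\<close> from \<open>x + y = x + a t\<close> gives \<open>y = a t\<close>; if \<open>r = s + t\<close>,
  then \<open>x + (y + a t) = x\<close>, so \<open>y + a t = 0\<close> by cancellation and \<open>y = 0\<close> by
  zerosumfreeness.\<close>

lemma principal_ideal_eq_dvd: "principal_ideal a = {x. a dvd x}"
  unfolding principal_ideal_def dvd_def by auto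

lemma semiring_ideal_principal_ideal: "semiring_ideal (principal_ideal a)"
  unfolding semiring_ideal_def principal_ideal_eq_dvd by auto

lemma add_cancellative_left_cancel:
  fixes x y z :: "'a::comm_semiring_1"
  assumes "add_cancellative TYPE('a)" and "x + y = x + z"
  shows "y = z"
  using assms unfolding add_cancellative_def by (metis add.commute)

lemma add_eq_self_imp_summand_zero:
  fixes x y z :: "'a::comm_semiring_1"
  assumes "add_cancellative TYPE('a)" and "zerosumfree TYPE('a)"
    and "x + (y + z) = x"
  shows "y = 0"
proof -
  have "y + z = 0"
    using add_cancellative_left_cancel[OF assms(1)] assms(3) by (metis add_0_right)
  then show ?thesis
    using assms(2) unfolding zerosumfree_def by blast
qed

lemma dvd_add_imp_dvd_right:
  fixes a x y :: "'a::comm_semiring_1"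
  assumes canc: "add_cancellative TYPE('a)" and "yoked TYPE('a)"
    and zsf: "zerosumfree TYPE('a)"
    and "a dvd x + y" and "a dvd x"
  shows "a dvd y"
proof -
  obtain s where s: "x + y = a * s" using \<open>a dvd x + y\<close> by (auto elim: dvdE)
  obtain r where r: "x = a * r" using \<open>a dvd x\<close> by (auto elim: dvdE)
  obtain t where "r + t = s \<or> s + t = r"
    using \<open>yoked TYPE('a)\<close> unfolding yoked_def by blast
  then show ?thesis
  proof
    assume "r + t = s"
    then have "x + y = x + a * t" by (metis distrib_left r s)
    then have "y = a * t" by (rule add_cancellative_left_cancel[OF canc])
    then show ?thesis by simp
  next
    assume "s + t = r"
    then have "x + (y + a * t) = x"
      by (metis add.assoc distrib_left r s)
    then have "y = 0" by (rule add_eq_self_imp_summand_zero[OF canc zsf])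
    then show ?thesis by simp
  qed
qed

theorem lemma2p10:
  fixes a :: "'a::comm_semiring_1"
  assumes "add_cancellative TYPE('a)"
    and "yoked TYPE('a)"
    and "zerosumfree TYPE('a)"
  shows "k_ideal (principal_ideal a)"
proof -
  have "y \<in> principal_ideal a" if "x + y \<in> principal_ideal a" and "x \<in> principal_ideal a" for x y
    using that dvd_add_imp_dvd_right[OF assms] unfolding principal_ideal_eq_dvd by blast
  then show ?thesis
    unfolding k_ideal_def using semiring_ideal_principal_ideal by blast
qed

end
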